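(* Let $S$ be a reflective numerical semigroup with $\mathrm{g}(S)=g\ge1$ and $\mathrm{m}(S)=a$, and let $r\in\{1,\dots,a-1\}$ satisfy $g\equiv r\pmod a$. Then the minimal generating set $A$ of $S$ is \[ A=\begin{cases} \{a\}\cup\big(\{g+1,\dots,g+(a-1)\}\setminus\{g+(a-r)\}\big) & \text{if } g\not\equiv -1\pmod a,\\ \{a,\ 2g+1\}\cup\{g+2,\dots,g+(a-1)\} & \text{if } g\equiv -1\pmod a.\end{cases}\] Consequently the embedding dimension of $S$ is $a-1$ if $g\not\equiv-1\pmod a$ and $a$ if $g\equiv -1\pmod a$.
   Context: A numerical semigroup is a submonoid $S$ of $(\mathbb{N}_0,+)$ with finite complement. Its set of gaps is $\mathrm{H}(S)=\mathbb{N}_0\setminus S$, its genus is $\mathrm{g}(S)=\#\mathrm{H}(S)$, and its multiplicity $\mathrm{m}(S)$ is the smallest positive element of $S$. For $A\subseteq\mathbb{N}_0$, $\langle A\rangle$ denotes the set of finite $\mathbb{N}_0$-linear combinations of elements of $A$. The minimal generating set of $S$ is the unique inclusion-minimal $A$ with $S=\langle A\rangle$ (equivalently, a generating set in which no element is an $\mathbb{N}_0$-linear combination of the other elements); its cardinality is the embedding dimension of $S$. A numerical semigroup $S$ of genus $g\ge1$ is called reflective if for every $z\in\{0,1,\dots,g-1\}$ exactly one of $z$ and $z+g$ belongs to $S$. *)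

theory Defs
  imports Main
begin

inductive_set gen :: "nat set \<Rightarrow> nat set" for A :: "nat set" where
  gen_zero: "0 \<in> gen A"
| gen_add: "a \<in> A \<Longrightarrow> x \<in> gen A \<Longrightarrow> a + x \<in> gen A"

definition numerical_semigroup :: "nat set \<Rightarrow> bool" where
  "numerical_semigroup S \<longleftrightarrow> 0 \<in> S \<and> (\<forall>x\<in>S. \<forall>y\<in>S. x + y \<in> S) \<and> finite (UNIV - S)"

definition gaps :: "nat set \<Rightarrow> nat set" where
  "gaps S = UNIV - S"

definition genus :: "nat set \<Rightarrow> nat" where
  "genus S = card (gaps S)"

definition multiplicity :: "nat set \<Rightarrow> nat" where
  "multiplicity S = (LEAST x. x \<in> S \<and> 0 < x)"

definition is_minimal_generating_set :: "nat set \<Rightarrow> nat set \<Rightarrow> bool" where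
  "is_minimal_generating_set S A \<longleftrightarrow> S = gen A \<and> (\<forall>B. B \<subset> A \<longrightarrow> gen B \<noteq> S)"

definition minimal_generating_set :: "nat set \<Rightarrow> nat set" where
  "minimal_generating_set S = (THE A. is_minimal_generating_set S A)"

definition embedding_dimension :: "nat set \<Rightarrow> nat" where
  "embedding_dimension S = card (minimal_generating_set S)"

definition reflective :: "nat set \<Rightarrow> bool" where
  "reflective S \<longleftrightarrow> genus S \<ge> 1 \<and>
     (\<forall>z < genus S. (z \<in> S) \<noteq> (z + genus S \<in> S))"

end

theory Submission
  imports Defs
begin

text \<open>
  The minimal generating set of a submonoid of \<open>\<nat>\<close> is its set of atoms, the positive elements
  that are not sums of two positive elements. Reflectivity pairs \<open>z\<close> with \<open>z + g\<close>, so exactly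
  \<open>g\<close> numbers below \<open>2g\<close> are gaps and everything from \<open>2g\<close> on lies in \<open>S\<close>; moreover an element
  \<open>x < g\<close> of \<open>S\<close> stays in \<open>S\<close> when the multiplicity \<open>a\<close> is subtracted (otherwise \<open>x - a + g\<close>,
  hence \<open>x + g\<close>, would lie in \<open>S\<close>). Thus below \<open>g\<close> the semigroup consists of the multiples of
  \<open>a\<close>, and between \<open>g\<close> and \<open>2g\<close> of the numbers \<open>n\<close> with \<open>a \<nmid> n - g\<close>. From this explicit
  description one reads off the atoms: \<open>a\<close>, the non-multiples of \<open>a\<close> in \<open>(g, g + a)\<close>, and
  \<open>2g + 1\<close> exactly when \<open>a \<mid> g + 1\<close>; any other \<open>n \<ge> g + a\<close> splits as \<open>a + (n - a)\<close>
  or as \<open>(g + 1) + (n - g - 1)\<close>.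
\<close>

definition add_submonoid :: "nat set \<Rightarrow> bool" where
  "add_submonoid S \<longleftrightarrow> 0 \<in> S \<and> (\<forall>x\<in>S. \<forall>y\<in>S. x + y \<in> S)"

lemma gen_add_closed:
  assumes "x \<in> gen A" "y \<in> gen A"
  shows "x + y \<in> gen A"
  using assms(1) by induction (auto simp: add.assoc intro: gen.intros assms(2))

lemma subset_gen: "A \<subseteq> gen A"
  using gen_add[of _ A 0] by (auto intro: gen_zero)

lemma gen_least:
  assumes "add_submonoid S" "A \<subseteq> S"
  shows "gen A \<subseteq> S"
proof
  fix x assume "x \<in> gen A"
  then show "x \<in> S" by induction (use assms in \<open>auto simp: add_submonoid_def\<close>)
qed

definition atoms :: "nat set \<Rightarrow> nat set" where
  "atoms S = {n \<in> S. 0 < n \<and> \<not> (\<exists>s\<in>S. \<exists>t\<in>S. 0 < s \<and> 0 < t \<and> n = s + t)}"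

lemma atomsI:
  assumes "n \<in> S" "0 < n"
    and "\<And>s t. s \<in> S \<Longrightarrow> t \<in> S \<Longrightarrow> 0 < s \<Longrightarrow> 0 < t \<Longrightarrow> n = s + t \<Longrightarrow> False"
  shows "n \<in> atoms S"
  using assms unfolding atoms_def by blast

lemma add_notin_atoms:
  assumes "s \<in> S" "t \<in> S" "0 < s" "0 < t"
  shows "s + t \<notin> atoms S"
  using assms unfolding atoms_def by blast

lemma mem_gen_atoms:
  assumes "add_submonoid S" "n \<in> S"
  shows "n \<in> gen (atoms S)"
  using assms(2)
proof (induction n rule: less_induct)
  case (less n)
  consider "n = 0" | "n \<in> atoms S"
    | s t where "s \<in> S" "t \<in> S" "0 < s" "0 < t" "n = s + t"
    using less.prems unfolding atoms_def by blast
  then show ?case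
  proof cases
    case 3
    then show ?thesis using less.IH gen_add_closed by (metis less_add_same_cancel1 less_add_same_cancel2)
  qed (use subset_gen gen_zero in auto)
qed

lemma gen_atoms:
  assumes "add_submonoid S"
  shows "gen (atoms S) = S"
proof
  show "gen (atoms S) \<subseteq> S" by (rule gen_least[OF assms]) (auto simp: atoms_def)
  show "S \<subseteq> gen (atoms S)" using mem_gen_atoms[OF assms] by blast
qed

lemma atoms_gen_subset: "atoms (gen A) \<subseteq> A"
proof
  fix x assume "x \<in> atoms (gen A)"
  then have "x \<in> gen A" and "x \<in> atoms (gen A)" unfolding atoms_def by auto
  then show "x \<in> A"
  proof (induction rule: gen.induct)
    case (gen_add a x)
    then show ?case
      using subset_gen add_notin_atoms[of a "gen A" x] by (cases "a = 0"; cases "x = 0") auto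
  qed (simp add: atoms_def)
qed

lemma minimal_generating_set_eq_atoms:
  assumes "add_submonoid S"
  shows "minimal_generating_set S = atoms S"
  unfolding minimal_generating_set_def
proof (rule the_equality)
  have "gen B \<noteq> S" if "B \<subset> atoms S" for B
    using atoms_gen_subset[of B] that by auto
  then show "is_minimal_generating_set S (atoms S)"
    unfolding is_minimal_generating_set_def using gen_atoms[OF assms] by blast
next
  fix A assume "is_minimal_generating_set S A"
  then have "gen A = S" and minimal: "\<forall>B. B \<subset> A \<longrightarrow> gen B \<noteq> S"
    unfolding is_minimal_generating_set_def by auto
  then have "atoms S \<subseteq> A" using atoms_gen_subset[of A] by simp
  with minimal gen_atoms[OF assms] show "A = atoms S" by auto
qed

lemma numerical_semigroup_add_submonoid: "numerical_semigroup S \<Longrightarrow> add_submonoid S"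
  unfolding numerical_semigroup_def add_submonoid_def by blast

lemma finite_gaps: "numerical_semigroup S \<Longrightarrow> finite (gaps S)"
  unfolding numerical_semigroup_def gaps_def by blast

lemma multiplicity_mem:
  assumes "numerical_semigroup S"
  shows "multiplicity S \<in> S" and "0 < multiplicity S"
proof -
  obtain n where "n \<notin> insert 0 (gaps S)"
    using ex_new_if_finite[OF infinite_UNIV_nat] finite_gaps[OF assms] by blast
  then have "n \<in> S \<and> 0 < n" unfolding gaps_def by auto
  from LeastI[of "\<lambda>x. x \<in> S \<and> 0 < x", OF this]
  show "multiplicity S \<in> S" and "0 < multiplicity S" unfolding multiplicity_def by auto
qed

lemma multiplicity_le: "x \<in> S \<Longrightarrow> 0 < x \<Longrightarrow> multiplicity S \<le> x"
  unfolding multiplicity_def by (simp add: Least_le)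

lemma multiplicity_le_Suc_genus:
  assumes "numerical_semigroup S"
  shows "multiplicity S \<le> genus S + 1"
proof -
  have "{1..<multiplicity S} \<subseteq> gaps S"
    using multiplicity_le[of _ S] unfolding gaps_def by fastforce
  then have "card {1..<multiplicity S} \<le> genus S"
    unfolding genus_def by (rule card_mono[OF finite_gaps[OF assms]])
  then show ?thesis by simp
qed

context
  fixes S :: "nat set" and g a :: nat
  assumes semigroup: "numerical_semigroup S" and refl: "reflective S"
    and genus_eq: "genus S = g" and multiplicity_eq: "multiplicity S = a"
begin

lemma reflective_mem_iff_shift_notin: "z < g \<Longrightarrow> z \<in> S \<longleftrightarrow> z + g \<notin> S"
  using refl genus_eq unfolding reflective_def by auto

lemma reflective_mem_ge_double_genus:
  assumes "2 * g \<le> n"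
  shows "n \<in> S"
proof -
  define f where "f z = (if z \<in> S then z + g else z)" for z
  have "inj_on f {..<g}"
    unfolding inj_on_def f_def by auto
  moreover have image_sub: "f ` {..<g} \<subseteq> gaps S \<inter> {..<2 * g}"
    using reflective_mem_iff_shift_notin unfolding f_def gaps_def by auto
  ultimately have "f ` {..<g} = gaps S"
    using card_subset_eq[OF finite_gaps[OF semigroup]] genus_eq
    by (metis card_image card_lessThan genus_def le_infE)
  with image_sub assms show ?thesis unfolding gaps_def by auto
qed

lemma reflective_diff_mem:
  assumes "x \<in> S" "y \<in> S" "y \<le> x" "x < g"
  shows "x - y \<in> S"
proof (rule ccontr)
  assume "x - y \<notin> S"
  then have "x - y + g \<in> S"
    using reflective_mem_iff_shift_notin[of "x - y"] assms(4) by auto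
  then have "y + (x - y + g) \<in> S"
    using assms(2) semigroup unfolding numerical_semigroup_def by blast
  moreover have "y + (x - y + g) = x + g" using assms(3) by simp
  ultimately show False using reflective_mem_iff_shift_notin[of x] assms(1,4) by simp
qed

lemma reflective_mem_below_genus_iff:
  assumes "x < g"
  shows "x \<in> S \<longleftrightarrow> a dvd x"
  using assms
proof (induction x rule: less_induct)
  case (less x)
  have aS: "a \<in> S" and a_pos: "0 < a" using multiplicity_mem[OF semigroup] multiplicity_eq by auto
  show ?case
  proof (cases "x < a")
    case True
    then have "x \<in> S \<longleftrightarrow> x = 0"
      using multiplicity_le[of x S] multiplicity_eq semigroup unfolding numerical_semigroup_def by fastforce
    with True show ?thesis by (auto dest: dvd_imp_le)
  next
    case False
    have "x \<in> S \<longleftrightarrow> x - a \<in> S"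
      using reflective_diff_mem[OF _ aS] False less.prems aS semigroup
      unfolding numerical_semigroup_def by (metis le_add_diff_inverse not_less)
    also have "\<dots> \<longleftrightarrow> a dvd x - a" using less False a_pos by simp
    also have "\<dots> \<longleftrightarrow> a dvd x" using False by (simp add: dvd_diff_nat dvd_minus_self)
    finally show ?thesis .
  qed
qed

lemma reflective_mem_iff:
  "n \<in> S \<longleftrightarrow> (n < g \<and> a dvd n) \<or> (g < n \<and> n < 2 * g \<and> \<not> a dvd n - g) \<or> 2 * g \<le> n"
proof -
  have "g \<notin> S" "0 < g"
    using reflective_mem_iff_shift_notin[of 0] refl genus_eq semigroup
    unfolding reflective_def numerical_semigroup_def by auto
  consider "n < g" | "n = g" | "g < n" "n < 2 * g" | "2 * g \<le> n" by linarith
  then show ?thesis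
  proof cases
    case 3
    then show ?thesis
      using reflective_mem_iff_shift_notin[of "n - g"] reflective_mem_below_genus_iff[of "n - g"]
      by auto
  qed (use \<open>g \<notin> S\<close> \<open>0 < g\<close> reflective_mem_below_genus_iff reflective_mem_ge_double_genus in auto)
qed

end

lemma dvd_between_iff:
  fixes a g n :: nat
  assumes "0 < a" "g < n" "n \<le> g + a"
  shows "a dvd n \<longleftrightarrow> n = g + (a - g mod a)"
proof -
  have next_multiple: "g + (a - g mod a) = a * (g div a) + a"
    using mod_less_divisor[OF assms(1), of g] mod_less_eq_dividend[of g a]
      minus_mod_eq_mult_div[of g a]
    by linarith
  show ?thesis
  proof
    assume "a dvd n"
    then obtain k where k: "n = a * k" by blast
    have "a * (g div a) < a * k" using assms(2) k mult_div_mod_eq[of a g] by linarith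
    moreover have "a * k < a * (g div a) + 2 * a"
      using assms(3) k mult_div_mod_eq[of a g] mod_less_divisor[OF assms(1), of g] by linarith
    then have "a * k < a * (g div a + 2)" by (simp add: algebra_simps)
    ultimately have "k = g div a + 1" unfolding mult_less_cancel1 by simp
    then show "n = g + (a - g mod a)" using k next_multiple by simp
  qed (simp add: next_multiple)
qed

locale reflective_shape =
  fixes S :: "nat set" and g a :: nat
  assumes multiplicity_pos: "0 < a" and not_dvd_genus: "\<not> a dvd g"
    and le_Suc_genus: "a \<le> g + 1"
    and mem_iff: "n \<in> S \<longleftrightarrow> (n < g \<and> a dvd n) \<or> (g < n \<and> n < 2 * g \<and> \<not> a dvd n - g) \<or> 2 * g \<le> n"
begin

lemma two_le_multiplicity: "2 \<le> a"
  using multiplicity_pos not_dvd_genus by (cases "a = 1") auto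

lemma genus_pos: "0 < g"
  using not_dvd_genus by (cases g) auto

lemma genus_notin: "g \<notin> S"
  using mem_iff[of g] not_dvd_genus by auto

lemma mem_below_genus_iff: "n < g \<Longrightarrow> n \<in> S \<longleftrightarrow> a dvd n"
  using mem_iff[of n] by auto

lemma mem_between_iff: "g < n \<Longrightarrow> n < 2 * g \<Longrightarrow> n \<in> S \<longleftrightarrow> \<not> a dvd n - g"
  using mem_iff[of n] by auto

lemma mem_ge_double_genus: "2 * g \<le> n \<Longrightarrow> n \<in> S"
  using mem_iff[of n] by auto

lemma multiple_mem:
  assumes "a dvd n"
  shows "n \<in> S"
proof -
  have "n \<noteq> g" using assms not_dvd_genus by auto
  moreover have "\<not> a dvd n - g" if "g < n"
    using assms not_dvd_genus dvd_diff_nat[OF assms, of "n - g"] that by auto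
  ultimately show ?thesis using mem_iff[of n] assms by linarith
qed

lemma mem_above_genus:
  assumes "g < n" "n < g + a"
  shows "n \<in> S"
proof -
  have "\<not> a dvd n - g" using assms by (auto dest: dvd_imp_le)
  then show ?thesis using mem_iff[of n] assms(1) by linarith
qed

lemma le_mem:
  assumes "x \<in> S" "0 < x"
  shows "a \<le> x"
proof (cases "x < g")
  case True
  then show ?thesis using mem_iff[of x] assms by (auto dest: dvd_imp_le)
next
  case False
  then show ?thesis using assms(1) genus_notin le_Suc_genus by (cases "x = g") auto
qed

lemma multiple_notin_atoms:
  assumes "a dvd n" "a < n"
  shows "n \<notin> atoms S"
proof -
  have "n - a \<in> S" using multiple_mem assms(1) by (simp add: dvd_diff_nat)
  then have "a + (n - a) \<notin> atoms S"
    using add_notin_atoms[of a S "n - a"] multiple_mem[of a] multiplicity_pos assms(2) by simp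
  with assms(2) show ?thesis by simp
qed

lemma atom_ge_cases:
  assumes atom: "n \<in> atoms S" and n_ge: "g + a \<le> n"
  shows "a dvd g + 1 \<and> n = 2 * g + 1"
proof -
  have n_S: "n \<in> S" using atom unfolding atoms_def by blast
  have "a + (n - a) \<in> atoms S" using atom n_ge by simp
  then have "n - a \<notin> S"
    using add_notin_atoms[of a S "n - a"] multiple_mem[of a] multiplicity_pos n_ge genus_pos by auto
  then have below: "n - a < 2 * g" and "a dvd n - a - g"
    using mem_iff[of "n - a"] n_ge by auto
  moreover have "n - g = (n - a - g) + a" using n_ge by simp
  ultimately have dvd: "a dvd n - g" by simp
  moreover have "g < n" using n_ge multiplicity_pos by simp
  ultimately have ge: "2 * g \<le> n" using mem_between_iff[of n] n_S not_le by blast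
  have "(g + 1) + (n - (g + 1)) \<in> atoms S" using atom n_ge multiplicity_pos by simp
  then have "n - (g + 1) \<notin> S"
    using add_notin_atoms[of "g + 1" S "n - (g + 1)"] mem_above_genus[of "g + 1"]
      two_le_multiplicity n_ge by auto
  then have "n \<le> 2 * g + 1"
    using mem_above_genus[of "n - (g + 1)"] below ge by linarith
  moreover have "n \<noteq> 2 * g" using dvd not_dvd_genus by auto
  ultimately have "n = 2 * g + 1" using ge by linarith
  with dvd show ?thesis by simp
qed

lemma atoms_eq:
  "atoms S = {a} \<union> {n. g < n \<and> n < g + a \<and> \<not> a dvd n} \<union> (if a dvd g + 1 then {2 * g + 1} else {})"
  (is "_ = ?A")
proof (rule set_eqI, rule iffI)
  fix n assume atom: "n \<in> atoms S"
  then have "n \<in> S" "0 < n" unfolding atoms_def by auto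
  then have "a \<le> n" and "n \<noteq> g" using le_mem genus_notin by auto
  consider "n < g" | "g < n" "n < g + a" | "g + a \<le> n" using \<open>n \<noteq> g\<close> by linarith
  then show "n \<in> ?A"
  proof cases
    case 1
    then show ?thesis using atom \<open>a \<le> n\<close> mem_below_genus_iff[of n] \<open>n \<in> S\<close> multiple_notin_atoms
      by fastforce
  next
    case 2
    then show ?thesis using atom \<open>a \<le> n\<close> multiple_notin_atoms by fastforce
  qed (use atom_ge_cases[OF atom] in auto)
next
  fix n assume "n \<in> ?A"
  then consider "n = a" | "g < n" "n < g + a" "\<not> a dvd n" | "a dvd g + 1" "n = 2 * g + 1"
    by (auto split: if_splits)
  then show "n \<in> atoms S"
  proof cases
    case 1
    then show ?thesis
      using multiple_mem[of a] le_mem two_le_multiplicity by (intro atomsI) force+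
  next
    case 2
    show ?thesis
    proof (rule atomsI)
      show "n \<in> S" "0 < n" using 2 mem_above_genus by auto
    next
      fix s t assume "s \<in> S" "t \<in> S" "0 < s" "0 < t" "n = s + t"
      with 2 have "s < g" "t < g" using le_mem[of s] le_mem[of t] by linarith+
      then have "a dvd s" "a dvd t"
        using mem_below_genus_iff \<open>s \<in> S\<close> \<open>t \<in> S\<close> by auto
      with 2 \<open>n = s + t\<close> show False by auto
    qed
  next
    case 3
    have no_split: False if "s \<in> S" "t \<in> S" "0 < s" "s \<le> t" "n = s + t" for s t
    proof -
      have "s < g" using that 3 genus_notin by (cases "s = g") auto
      then have "a dvd s" using mem_below_genus_iff that by auto
      moreover have "t - g = (g + 1) - s" using 3 that by simp
      ultimately have "a dvd t - g" using 3 by (simp add: dvd_diff_nat)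
      moreover have "g < t" "t < 2 * g"
        using 3 that \<open>s < g\<close> le_mem[of s] two_le_multiplicity by linarith+
      ultimately show False using mem_between_iff \<open>t \<in> S\<close> by auto
    qed
    show ?thesis
    proof (rule atomsI)
      show "n \<in> S" "0 < n" using 3 mem_ge_double_genus by auto
    next
      fix s t assume "s \<in> S" "t \<in> S" "0 < s" "0 < t" "n = s + t"
      then show False using no_split[of s t] no_split[of t s] by (cases "s \<le> t") auto
    qed
  qed
qed

lemma non_multiples_eq:
  "{n. g < n \<and> n < g + a \<and> \<not> a dvd n} = {g+1..g+(a-1)} - {g + (a - g mod a)}"
proof (rule set_eqI)
  fix n
  have "g < n \<and> n < g + a \<and> \<not> a dvd n \<longleftrightarrow> g < n \<and> n < g + a \<and> n \<noteq> g + (a - g mod a)"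
    using dvd_between_iff[OF multiplicity_pos, of g n] by auto
  then show "n \<in> {n. g < n \<and> n < g + a \<and> \<not> a dvd n} \<longleftrightarrow> n \<in> {g+1..g+(a-1)} - {g + (a - g mod a)}"
    by auto
qed

lemma atoms_eq_intervals:
  "atoms S = (if a dvd g + 1 then {a, 2*g+1} \<union> {g+2..g+(a-1)}
              else {a} \<union> ({g+1..g+(a-1)} - {g + (a - g mod a)}))"
proof (cases "a dvd g + 1")
  case True
  then have "Suc (g mod a) = a"
    using mod_Suc[of g a] by (auto simp: dvd_eq_mod_eq_0 split: if_splits)
  then have "{g+1..g+(a-1)} - {g + (a - g mod a)} = {g+2..g+(a-1)}" by auto
  with True show ?thesis unfolding atoms_eq non_multiples_eq by auto
next
  case False
  then show ?thesis unfolding atoms_eq non_multiples_eq by simp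
qed

lemma card_atoms: "card (atoms S) = (if a dvd g + 1 then a else a - 1)"
proof (cases "a dvd g + 1")
  case True
  have "a \<notin> {g+2..g+(a-1)}" "2*g+1 \<notin> {g+2..g+(a-1)}" "a \<noteq> 2*g+1"
    using le_Suc_genus genus_pos by auto
  with True show ?thesis unfolding atoms_eq_intervals using two_le_multiplicity by simp
next
  case False
  have "g + (a - g mod a) \<in> {g+1..g+(a-1)}"
    using not_dvd_genus mod_less_divisor[OF multiplicity_pos, of g] by (auto simp: dvd_eq_mod_eq_0)
  moreover have "a \<notin> {g+1..g+(a-1)} - {g + (a - g mod a)}"
    using non_multiples_eq[symmetric] by auto
  ultimately show ?thesis
    unfolding atoms_eq_intervals using False two_le_multiplicity by (simp add: card_Diff_singleton)
qed

end

theorem mainTheorem4: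
  fixes S :: "nat set" and g a r :: nat
  assumes "numerical_semigroup S"
    and "reflective S"
    and "genus S = g" and "g \<ge> 1"
    and "multiplicity S = a"
    and "r \<in> {1..a-1}" and "g mod a = r"
  shows "minimal_generating_set S =
           (if (g + 1) mod a \<noteq> 0
            then {a} \<union> ({g+1..g+(a-1)} - {g + (a - r)})
            else {a, 2*g+1} \<union> {g+2..g+(a-1)})
      \<and> embedding_dimension S = (if (g + 1) mod a \<noteq> 0 then a - 1 else a)"
proof -
  have a_pos: "0 < a" and not_dvd: "\<not> a dvd g"
    using assms(6,7) by (auto simp: dvd_eq_mod_eq_0)
  interpret reflective_shape S g a
  proof
    show "a \<le> g + 1" using multiplicity_le_Suc_genus[OF assms(1)] assms(3,5) by simp
    show "n \<in> S \<longleftrightarrow> (n < g \<and> a dvd n) \<or> (g < n \<and> n < 2 * g \<and> \<not> a dvd n - g) \<or> 2 * g \<le> n"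
      for n by (rule reflective_mem_iff[OF assms(1,2,3,5)])
  qed (fact a_pos not_dvd)+
  have "minimal_generating_set S = atoms S"
    by (rule minimal_generating_set_eq_atoms[OF numerical_semigroup_add_submonoid[OF assms(1)]])
  moreover have "(g + 1) mod a \<noteq> 0 \<longleftrightarrow> \<not> a dvd g + 1" by (simp add: dvd_eq_mod_eq_0)
  ultimately show ?thesis
    using atoms_eq_intervals card_atoms assms(7) unfolding embedding_dimension_def by simp
qed

end
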